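(* For the $3\times3$ absorbing game \[ A=\begin{bmatrix}1^* & 1^* & 2^*\\ 1^* & 2^* & 0\\ 2^* & 0 & 1^*\end{bmatrix}, \] let $(x_\lambda)_{\lambda\in(0,1]}$ be any family of optimal stationary strategies of Player 1 in the $\lambda$-discounted games. Then every accumulation point $x=(x^1,x^2,x^3)$ of $x_\lambda$ as $\lambda\to0$ satisfies $x^i>0$ for $i=1,2,3$. Moreover the limit value satisfies $v\ge 4/3$. *)

theory Defs
  imports "HOL-Analysis.Analysis"
begin

text \<open>The game is given by a payoff
matrix g and a 0/1 matrix p: entry (i,j) is absorbing (starred) iff p i j = 1, in which
case g i j is the absorbing payoff; otherwise g i j is the stage payoff and play stays
in the non-absorbing state.\<close>

definition strat_simplex :: "(real^'n) set" where
  "strat_simplex = {x. (\<forall>i. 0 \<le> x$i) \<and> (\<Sum>i\<in>UNIV. x$i) = 1}"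

text \<open>Normalized lambda-discounted payoff of the stationary pair (x,y), starting in the
non-absorbing state: r = lambda*g(x,y) + (1-lambda)*(expected continuation).\<close>
definition disc_payoff ::
  "real^'m^'n \<Rightarrow> real^'m^'n \<Rightarrow> real \<Rightarrow> real^'n \<Rightarrow> real^'m \<Rightarrow> real" where
  "disc_payoff g p l x y =
     (\<Sum>i\<in>UNIV. \<Sum>j\<in>UNIV. x$i * y$j * (l * (1 - p$i$j) * g$i$j + p$i$j * g$i$j))
   / (\<Sum>i\<in>UNIV. \<Sum>j\<in>UNIV. x$i * y$j * (l * (1 - p$i$j) + p$i$j))"

definition disc_value :: "real^'m^'n \<Rightarrow> real^'m^'n \<Rightarrow> real \<Rightarrow> real" where
  "disc_value g p l = (SUP x\<in>strat_simplex. INF y\<in>strat_simplex. disc_payoff g p l x y)"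

definition optimal_strategy1 ::
  "real^'m^'n \<Rightarrow> real^'m^'n \<Rightarrow> real \<Rightarrow> real^'n \<Rightarrow> bool" where
  "optimal_strategy1 g p l x \<longleftrightarrow>
     x \<in> strat_simplex \<and> (\<forall>y\<in>strat_simplex. disc_payoff g p l x y \<ge> disc_value g p l)"

definition gameA_payoff :: "real^3^3" where
  "gameA_payoff = vector [vector [1,1,2], vector [1,2,0], vector [2,0,1]]"

definition gameA_absorb :: "real^3^3" where
  "gameA_absorb = vector [vector [1,1,1], vector [1,1,0], vector [1,0,1]]"

definition accumulation_point_at0 :: "(real \<Rightarrow> 'a::topological_space) \<Rightarrow> 'a \<Rightarrow> bool" where
  "accumulation_point_at0 f a \<longleftrightarrow>
     (\<exists>s::nat \<Rightarrow> real. (\<forall>n. s n \<in> {0<..1}) \<and> s \<longlonglongrightarrow> 0 \<and> (\<lambda>n. f (s n)) \<longlonglongrightarrow> a)"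

end

theory Submission
  imports Defs
begin

text \<open>Let t be the root in (1/3, 1/2) of t^2 = (1 - t)^3. The stationary strategy
((1-t)^2, t(1-t), t) guarantees Player 1 at least 1 + t - 2\<lambda> in the \<lambda>-discounted game,
and, the matrix being symmetric, the same strategy lets Player 2 hold Player 1 to at most 1 + t.
Hence v(\<lambda>) tends to 1 + t > 4/3. An optimal x(\<lambda>) must secure 1 + t - 2\<lambda> against every pure
column; in the limit this yields -t(x1+x2) + (1-t)x3 \<ge> 0, -t x1 + (1-t)x2 \<ge> 0 and
(1-t)x1 - t x3 \<ge> 0, which force in turn x3 > 0, x1 > 0 and x2 > 0.\<close>

text \<open>The bilinear form x \<bullet> (excess_matrix g p l w *v y) is the numerator of
disc_payoff g p l x y minus w times its denominator, so its sign decides whether the payoff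
reaches w.\<close>
definition excess_matrix :: "real^'m^'n \<Rightarrow> real^'m^'n \<Rightarrow> real \<Rightarrow> real \<Rightarrow> real^'m^'n" where
  "excess_matrix g p l w = (\<chi> i j. (l * (1 - p$i$j) + p$i$j) * (g$i$j - w))"

lemma strat_simplex_3:
  "(x::real^3) \<in> strat_simplex \<longleftrightarrow> 0 \<le> x$1 \<and> 0 \<le> x$2 \<and> 0 \<le> x$3 \<and> x$1 + x$2 + x$3 = 1"
  by (simp add: strat_simplex_def forall_3 sum_3)

lemma axis_in_strat_simplex: "axis j 1 \<in> strat_simplex"
  by (simp add: strat_simplex_def axis_def)

lemma closed_strat_simplex: "closed strat_simplex"
  unfolding strat_simplex_def
  by (intro closed_Collect_conj closed_Collect_all closed_Collect_le closed_Collect_eq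
      continuous_intros)

lemma strat_simplex_inner_nonneg:
  assumes "x \<in> strat_simplex" "\<And>i. 0 \<le> u$i"
  shows "0 \<le> x \<bullet> u"
  using assms unfolding strat_simplex_def inner_vec_def by (auto intro!: sum_nonneg)

lemma strat_simplex_inner_nonpos:
  assumes "x \<in> strat_simplex" "\<And>i. u$i \<le> 0"
  shows "x \<bullet> u \<le> 0"
  using assms unfolding strat_simplex_def inner_vec_def
  by (auto intro!: sum_nonpos mult_nonneg_nonpos)

lemma disc_payoff_denominator_ge:
  assumes "0 \<le> l" "l \<le> 1" "\<And>i j. 0 \<le> p$i$j \<and> p$i$j \<le> 1"
    and "x \<in> strat_simplex" "y \<in> strat_simplex"
  shows "l \<le> (\<Sum>i\<in>UNIV. \<Sum>j\<in>UNIV. x$i * y$j * (l * (1 - p$i$j) + p$i$j))"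
proof -
  have "l = (\<Sum>i\<in>UNIV. \<Sum>j\<in>UNIV. x$i * y$j * l)"
    using assms(4,5) by (simp add: strat_simplex_def sum_distrib_left[symmetric]
        sum_distrib_right[symmetric] mult.assoc[symmetric])
  also have "\<dots> \<le> (\<Sum>i\<in>UNIV. \<Sum>j\<in>UNIV. x$i * y$j * (l * (1 - p$i$j) + p$i$j))"
  proof (intro sum_mono mult_left_mono)
    fix i j
    show "l \<le> l * (1 - p$i$j) + p$i$j"
      using assms(2) assms(3)[of i j] mult_left_mono[of l 1 "p$i$j"] by (simp add: algebra_simps)
    show "0 \<le> x$i * y$j"
      using assms(4,5) by (simp add: strat_simplex_def)
  qed
  finally show ?thesis .
qed

lemma disc_payoff_ge_iff_excess:
  assumes "0 < l" "l \<le> 1" "\<And>i j. 0 \<le> p$i$j \<and> p$i$j \<le> 1"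
    and "x \<in> strat_simplex" "y \<in> strat_simplex"
  shows "w \<le> disc_payoff g p l x y \<longleftrightarrow> 0 \<le> x \<bullet> (excess_matrix g p l w *v y)"
    and "disc_payoff g p l x y \<le> w \<longleftrightarrow> x \<bullet> (excess_matrix g p l w *v y) \<le> 0"
proof -
  define N where "N = (\<Sum>i\<in>UNIV. \<Sum>j\<in>UNIV. x$i * y$j * (l * (1 - p$i$j) * g$i$j + p$i$j * g$i$j))"
  define D where "D = (\<Sum>i\<in>UNIV. \<Sum>j\<in>UNIV. x$i * y$j * (l * (1 - p$i$j) + p$i$j))"
  have "0 < D"
    using disc_payoff_denominator_ge[of l p x y] assms unfolding D_def by fastforce
  moreover have "x \<bullet> (excess_matrix g p l w *v y) = N - w * D"
    unfolding N_def D_def excess_matrix_def inner_vec_def matrix_vector_mult_def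
    by (simp add: sum_distrib_left sum_subtractf[symmetric] algebra_simps)
  ultimately show "w \<le> disc_payoff g p l x y \<longleftrightarrow> 0 \<le> x \<bullet> (excess_matrix g p l w *v y)"
    and "disc_payoff g p l x y \<le> w \<longleftrightarrow> x \<bullet> (excess_matrix g p l w *v y) \<le> 0"
    unfolding disc_payoff_def N_def[symmetric] D_def[symmetric]
    by (simp_all add: le_divide_eq divide_le_eq)
qed

lemma disc_payoff_nonneg:
  assumes "\<And>i j. 0 \<le> g$i$j" "\<And>i j. 0 \<le> p$i$j \<and> p$i$j \<le> 1" "0 \<le> l"
    and "x \<in> strat_simplex" "y \<in> strat_simplex"
  shows "0 \<le> disc_payoff g p l x y"
  using assms unfolding disc_payoff_def strat_simplex_def
  by (intro divide_nonneg_nonneg sum_nonneg mult_nonneg_nonneg add_nonneg_nonneg) auto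

lemma SUP_INF_between:
  fixes f :: "'a \<Rightarrow> 'b \<Rightarrow> real"
  assumes "x0 \<in> A" "\<And>y. y \<in> B \<Longrightarrow> a \<le> f x0 y"
    and "y0 \<in> B" "\<And>x. x \<in> A \<Longrightarrow> f x y0 \<le> b"
    and "\<And>x y. x \<in> A \<Longrightarrow> y \<in> B \<Longrightarrow> c \<le> f x y"
  shows "a \<le> (SUP x\<in>A. INF y\<in>B. f x y)" and "(SUP x\<in>A. INF y\<in>B. f x y) \<le> b"
proof -
  have INF_le: "(INF y\<in>B. f x y) \<le> b" if "x \<in> A" for x
  proof -
    have "bdd_below (f x ` B)"
      using assms(5) that by (intro bdd_belowI2[where m = c]) auto
    then have "(INF y\<in>B. f x y) \<le> f x y0"
      using assms(3) by (rule cINF_lower)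
    then show ?thesis
      using assms(4) that by fastforce
  qed
  show "(SUP x\<in>A. INF y\<in>B. f x y) \<le> b"
    using assms(1) INF_le by (intro cSUP_least) auto
  have "a \<le> (INF y\<in>B. f x0 y)"
    using assms(2,3) by (intro cINF_greatest) auto
  also have "\<dots> \<le> (SUP x\<in>A. INF y\<in>B. f x y)"
    using assms(1) INF_le by (intro cSUP_upper bdd_aboveI2[where M = b]) auto
  finally show "a \<le> (SUP x\<in>A. INF y\<in>B. f x y)" .
qed

lemma disc_value_between:
  assumes "\<And>i j. 0 \<le> g$i$j" "\<And>i j. 0 \<le> p$i$j \<and> p$i$j \<le> 1" "0 \<le> l"
    and "x0 \<in> strat_simplex" "\<And>y. y \<in> strat_simplex \<Longrightarrow> a \<le> disc_payoff g p l x0 y"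
    and "y0 \<in> strat_simplex" "\<And>x. x \<in> strat_simplex \<Longrightarrow> disc_payoff g p l x y0 \<le> b"
  shows "a \<le> disc_value g p l" and "disc_value g p l \<le> b"
  using SUP_INF_between[where f = "disc_payoff g p l", OF assms(4-7) disc_payoff_nonneg[OF assms(1-3)]]
  unfolding disc_value_def by auto

lemma optimal_strategy1_excess_col_nonneg:
  assumes "optimal_strategy1 g p l x" "w \<le> disc_value g p l"
    and "0 < l" "l \<le> 1" "\<And>i j. 0 \<le> p$i$j \<and> p$i$j \<le> 1"
  shows "0 \<le> (x v* excess_matrix g p l w)$j"
proof -
  have x: "x \<in> strat_simplex" and "disc_value g p l \<le> disc_payoff g p l x (axis j 1)"
    using assms(1) axis_in_strat_simplex unfolding optimal_strategy1_def by auto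
  then have "w \<le> disc_payoff g p l x (axis j 1)"
    using assms(2) by linarith
  then have "0 \<le> x \<bullet> (excess_matrix g p l w *v axis j 1)"
    using disc_payoff_ge_iff_excess(1)[OF assms(3-5) x axis_in_strat_simplex] by simp
  then show ?thesis
    by (simp add: dot_lmul_matrix[symmetric] inner_axis)
qed

lemma tendsto_excess_col:
  assumes "(x \<longlongrightarrow> x0) F" "(l \<longlongrightarrow> l0) F" "(w \<longlongrightarrow> w0) F"
  shows "((\<lambda>n. (x n v* excess_matrix g p (l n) (w n))$j) \<longlongrightarrow> (x0 v* excess_matrix g p l0 w0)$j) F"
  unfolding vector_matrix_mult_def excess_matrix_def
  by (simp, intro tendsto_intros tendsto_vec_nth assms)

lemma limit_of_optimal_strategies1:
  assumes "\<And>i j. 0 \<le> p$i$j \<and> p$i$j \<le> 1"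
    and "\<And>n. l n \<in> {0<..1}" "l \<longlonglongrightarrow> 0"
    and "\<And>n. optimal_strategy1 g p (l n) (x n)" "x \<longlonglongrightarrow> x0"
    and "\<And>n. w n \<le> disc_value g p (l n)" "w \<longlonglongrightarrow> w0"
  shows "x0 \<in> strat_simplex" and "0 \<le> (x0 v* excess_matrix g p 0 w0)$j"
proof -
  show "x0 \<in> strat_simplex"
    using assms(4,5) closed_strat_simplex
    by (auto intro: closed_sequentially simp: optimal_strategy1_def)
  have "0 \<le> (x n v* excess_matrix g p (l n) (w n))$j" for n :: nat
    using assms(1) assms(2,4,6)[of n] by (intro optimal_strategy1_excess_col_nonneg) auto
  then show "0 \<le> (x0 v* excess_matrix g p 0 w0)$j"
    using assms(3,5,7) by (intro LIMSEQ_le_const[OF tendsto_excess_col]) auto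
qed

abbreviation gameA_excess :: "real \<Rightarrow> real \<Rightarrow> real^3^3" where
  "gameA_excess \<equiv> excess_matrix gameA_payoff gameA_absorb"

lemma gameA_payoff_nonneg: "0 \<le> gameA_payoff$i$j"
  using exhaust_3[of i] exhaust_3[of j] by (auto simp: gameA_payoff_def)

lemma gameA_absorb_bounds: "0 \<le> gameA_absorb$i$j \<and> gameA_absorb$i$j \<le> 1"
  using exhaust_3[of i] exhaust_3[of j] by (auto simp: gameA_absorb_def)

lemma gameA_excess_cols:
  "(x v* gameA_excess l w)$1 = (1 - w) * x$1 + (1 - w) * x$2 + (2 - w) * x$3"
  "(x v* gameA_excess l w)$2 = (1 - w) * x$1 + (2 - w) * x$2 - l * w * x$3"
  "(x v* gameA_excess l w)$3 = (2 - w) * x$1 - l * w * x$2 + (1 - w) * x$3"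
  unfolding vector_matrix_mult_def excess_matrix_def gameA_payoff_def gameA_absorb_def
  by (simp_all add: sum_3 algebra_simps)

lemma gameA_excess_rows:
  "(gameA_excess l w *v y)$1 = (1 - w) * y$1 + (1 - w) * y$2 + (2 - w) * y$3"
  "(gameA_excess l w *v y)$2 = (1 - w) * y$1 + (2 - w) * y$2 - l * w * y$3"
  "(gameA_excess l w *v y)$3 = (2 - w) * y$1 - l * w * y$2 + (1 - w) * y$3"
  unfolding matrix_vector_mult_def excess_matrix_def gameA_payoff_def gameA_absorb_def
  by (simp_all add: sum_3 algebra_simps)

lemma exists_root_sq_eq_cube: "\<exists>t::real. t^2 = (1 - t)^3 \<and> 1/3 < t \<and> t < 1/2"
proof -
  have "\<exists>t. 1/3 \<le> t \<and> t \<le> 1/2 \<and> (\<lambda>t::real. t^2 - (1 - t)^3) t = 0"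
    by (rule IVT') (auto intro!: continuous_intros simp: power2_eq_square power3_eq_cube)
  then obtain t :: real where t: "1/3 \<le> t" "t \<le> 1/2" "t^2 - (1 - t)^3 = 0"
    by auto
  moreover have "(1/3::real)^2 - (1 - 1/3)^3 \<noteq> 0" "(1/2::real)^2 - (1 - 1/2)^3 \<noteq> 0"
    by (simp_all add: power_divide)
  then have "t \<noteq> 1/3" "t \<noteq> 1/2"
    using t(3) by metis+
  ultimately show ?thesis
    by auto
qed

text \<open>At \<lambda> = 0 and w = 1 + t this strategy makes all three columns of the excess matrix
vanish; for the third column this is exactly t^2 = (1 - t)^3.\<close>
definition gameA_strategy :: "real \<Rightarrow> real^3" where
  "gameA_strategy t = vector [(1 - t)^2, t * (1 - t), t]"

lemma gameA_strategy_in_strat_simplex: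
  assumes "0 \<le> t" "t \<le> 1"
  shows "gameA_strategy t \<in> strat_simplex"
proof -
  have "(1 - t)^2 + t * (1 - t) + t = 1"
    by (simp add: power2_eq_square algebra_simps)
  then show ?thesis
    using assms unfolding strat_simplex_3 gameA_strategy_def by simp
qed

lemma gameA_strategy_guarantees:
  assumes t: "t^2 = (1 - t)^3" "1/3 < t" "t < 1/2" and l: "0 < l" "l \<le> 1"
    and y: "y \<in> strat_simplex"
  shows "1 + t - 2 * l \<le> disc_payoff gameA_payoff gameA_absorb l (gameA_strategy t) y"
proof -
  define x where "x = gameA_strategy t"
  define w where "w = 1 + t - 2 * l"
  have "(x v* gameA_excess l w)$1 = 2 * l"
    unfolding gameA_excess_cols x_def w_def gameA_strategy_def
    by (simp add: power2_eq_square algebra_simps)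
  moreover have "(x v* gameA_excess l w)$2 = l * (2 - 3 * t - t^2 + 2 * l * t)"
    unfolding gameA_excess_cols x_def w_def gameA_strategy_def
    by (simp add: power2_eq_square algebra_simps)
  moreover have "(x v* gameA_excess l w)$3
      = ((1 - t)^3 - t^2) + l * (2 * (1 - t)^2 + t + t^3 + 2 * l * t * (1 - t))"
    unfolding gameA_excess_cols x_def w_def gameA_strategy_def
    by (simp add: power2_eq_square power3_eq_cube algebra_simps)
  moreover have "t^2 \<le> (1/2)^2"
    using t by (intro power_mono) auto
  ultimately have "\<forall>j. 0 \<le> (x v* gameA_excess l w)$j"
    using t l unfolding forall_3 by (simp add: power2_eq_square)
  then have "0 \<le> y \<bullet> (x v* gameA_excess l w)"
    using y by (intro strat_simplex_inner_nonneg) auto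
  then have "0 \<le> x \<bullet> (gameA_excess l w *v y)"
    by (metis dot_lmul_matrix inner_commute)
  moreover have "x \<in> strat_simplex"
    unfolding x_def using t by (intro gameA_strategy_in_strat_simplex) auto
  ultimately show ?thesis
    using disc_payoff_ge_iff_excess(1)[OF l gameA_absorb_bounds _ y] unfolding x_def w_def by blast
qed

lemma gameA_strategy_holds:
  assumes t: "t^2 = (1 - t)^3" "0 < t" "t < 1" and l: "0 < l" "l \<le> 1"
    and x: "x \<in> strat_simplex"
  shows "disc_payoff gameA_payoff gameA_absorb l x (gameA_strategy t) \<le> 1 + t"
proof -
  define y where "y = gameA_strategy t"
  have "(gameA_excess l (1 + t) *v y)$1 = 0"
    unfolding gameA_excess_rows y_def gameA_strategy_def
    by (simp add: power2_eq_square algebra_simps)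
  moreover have "(gameA_excess l (1 + t) *v y)$2 = - (l * (1 + t) * t)"
    unfolding gameA_excess_rows y_def gameA_strategy_def
    by (simp add: power2_eq_square algebra_simps)
  moreover have "(gameA_excess l (1 + t) *v y)$3 = ((1 - t)^3 - t^2) - l * (1 + t) * t * (1 - t)"
    unfolding gameA_excess_rows y_def gameA_strategy_def
    by (simp add: power2_eq_square power3_eq_cube algebra_simps)
  ultimately have "\<forall>i. (gameA_excess l (1 + t) *v y)$i \<le> 0"
    using t l unfolding forall_3 by simp
  then have "x \<bullet> (gameA_excess l (1 + t) *v y) \<le> 0"
    using x by (intro strat_simplex_inner_nonpos) auto
  then show ?thesis
    using disc_payoff_ge_iff_excess(2)[OF l gameA_absorb_bounds x gameA_strategy_in_strat_simplex] t
    unfolding y_def by simp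
qed

lemma gameA_disc_value_bounds:
  assumes t: "t^2 = (1 - t)^3" "1/3 < t" "t < 1/2" and l: "0 < l" "l \<le> 1"
  shows "1 + t - 2 * l \<le> disc_value gameA_payoff gameA_absorb l"
    and "disc_value gameA_payoff gameA_absorb l \<le> 1 + t"
proof -
  have "gameA_strategy t \<in> strat_simplex"
    using t by (intro gameA_strategy_in_strat_simplex) auto
  moreover have "disc_payoff gameA_payoff gameA_absorb l x (gameA_strategy t) \<le> 1 + t"
    if "x \<in> strat_simplex" for x
    using t by (intro gameA_strategy_holds l that) auto
  ultimately show "1 + t - 2 * l \<le> disc_value gameA_payoff gameA_absorb l"
    and "disc_value gameA_payoff gameA_absorb l \<le> 1 + t"
    using disc_value_between[OF gameA_payoff_nonneg gameA_absorb_bounds, of l "gameA_strategy t"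
        "1 + t - 2 * l" "gameA_strategy t" "1 + t"] gameA_strategy_guarantees[OF t l] l
    by auto
qed

lemma gameA_disc_value_tendsto:
  assumes t: "t^2 = (1 - t)^3" "1/3 < t" "t < 1/2"
  shows "(disc_value gameA_payoff gameA_absorb \<longlongrightarrow> 1 + t) (at_right 0)"
proof (rule tendsto_sandwich)
  have "eventually (\<lambda>l::real. 0 < l \<and> l \<le> 1) (at_right 0)"
    unfolding eventually_at_right_field by (intro exI[of _ 1]) auto
  then show "eventually (\<lambda>l. 1 + t - 2 * l \<le> disc_value gameA_payoff gameA_absorb l) (at_right 0)"
    and "eventually (\<lambda>l. disc_value gameA_payoff gameA_absorb l \<le> 1 + t) (at_right 0)"
    by (auto elim!: eventually_mono intro: gameA_disc_value_bounds[OF t])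
  have "((\<lambda>l::real. 1 + t - 2 * l) \<longlongrightarrow> 1 + t - 2 * 0) (at_right 0)"
    by (intro tendsto_intros)
  then show "((\<lambda>l::real. 1 + t - 2 * l) \<longlongrightarrow> 1 + t) (at_right 0)"
    by simp
qed simp

lemma gameA_limit_strategy_positive:
  assumes "0 < t" "x \<in> strat_simplex" "\<forall>j. 0 \<le> (x v* gameA_excess 0 (1 + t))$j"
  shows "0 < x$i"
proof -
  have col1: "t * (x$1 + x$2) \<le> (1 - t) * x$3"
    and col2: "t * x$1 \<le> (1 - t) * x$2"
    and col3: "t * x$3 \<le> (1 - t) * x$1"
    using assms(3) unfolding forall_3 gameA_excess_cols by (simp_all add: algebra_simps)
  have x: "0 \<le> x$1" "0 \<le> x$2" "0 \<le> x$3" "x$1 + x$2 + x$3 = 1"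
    using assms(2) unfolding strat_simplex_3 by auto
  have "0 < x$3"
    using col1 x assms(1) by (cases "x$3 = 0") auto
  then have "0 < x$1"
    using col3 x mult_pos_pos[OF assms(1)] by (cases "x$1 = 0") fastforce+
  then have "0 < x$2"
    using col2 x mult_pos_pos[OF assms(1)] by (cases "x$2 = 0") fastforce+
  show ?thesis
    using exhaust_3[of i] \<open>0 < x$1\<close> \<open>0 < x$2\<close> \<open>0 < x$3\<close> by auto
qed

lemma gameA_accumulation_point_positive:
  fixes t :: real and xs :: "real \<Rightarrow> real^3"
  assumes t: "t^2 = (1 - t)^3" "1/3 < t" "t < 1/2"
    and opt: "\<forall>l\<in>{0<..1}. optimal_strategy1 gameA_payoff gameA_absorb l (xs l)"
    and acc: "accumulation_point_at0 xs x"
  shows "0 < x$i"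
proof -
  obtain s where s: "\<And>n. s n \<in> {0<..1}" "s \<longlonglongrightarrow> 0" "(\<lambda>n. xs (s n)) \<longlonglongrightarrow> x"
    using acc unfolding accumulation_point_at0_def by blast
  have opt_s: "optimal_strategy1 gameA_payoff gameA_absorb (s n) (xs (s n))" for n
    using opt s(1) by blast
  have val: "1 + t - 2 * s n \<le> disc_value gameA_payoff gameA_absorb (s n)" for n
    using s(1)[of n] gameA_disc_value_bounds(1)[OF t] by simp
  have "(\<lambda>n. 1 + t - 2 * s n) \<longlonglongrightarrow> 1 + t - 2 * 0"
    by (intro tendsto_intros s(2))
  then have "x \<in> strat_simplex" "\<forall>j. 0 \<le> (x v* gameA_excess 0 (1 + t))$j"
    using limit_of_optimal_strategies1[OF gameA_absorb_bounds s(1,2) opt_s s(3) val] by simp_all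
  then show ?thesis
    using gameA_limit_strategy_positive[of t x i] t by simp
qed

theorem mainTheorem4:
  fixes xs :: "real \<Rightarrow> real^3"
  assumes "\<forall>l\<in>{0<..1}. optimal_strategy1 gameA_payoff gameA_absorb l (xs l)"
  shows "(\<forall>x. accumulation_point_at0 xs x \<longrightarrow> (\<forall>i. x$i > 0))
         \<and> (\<exists>v. (disc_value gameA_payoff gameA_absorb \<longlongrightarrow> v) (at_right 0) \<and> v \<ge> 4/3)"
proof -
  obtain t :: real where t: "t^2 = (1 - t)^3" "1/3 < t" "t < 1/2"
    using exists_root_sq_eq_cube by blast
  then have "(disc_value gameA_payoff gameA_absorb \<longlongrightarrow> 1 + t) (at_right 0)" "4/3 \<le> 1 + t"
    using gameA_disc_value_tendsto by auto
  moreover have "\<forall>x. accumulation_point_at0 xs x \<longrightarrow> (\<forall>i. x$i > 0)"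
    using gameA_accumulation_point_positive[OF t assms] by blast
  ultimately show ?thesis
    by blast
qed

end
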